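(* Let $r\in\mathbb Z_n$, $0\le j\le\frac{n-1}2$, and let $\mathbf w_0\neq0$ be a row vector with $\mathbf w_0Z=q^{2r}\mathbf w_0$. For $1\le k\le n-1$ let $\mathbf w_k=q^{kr}\mathcal L_k(q^j+q^{-j})\mathbf w_0=q^{kr}(q^{kj}+q^{-kj})\mathbf w_0$. Then the row vector $\mathbf w_{j,r}=[\mathbf w_{n-1}\ \mathbf w_{n-2}\ \cdots\ \mathbf w_1\ \mathbf w_0]$ satisfies $\mathbf w_{j,r}M=\lambda_{j,r}\mathbf w_{j,r}$, $\lambda_{j,r}=q^r(q^j+q^{-j})$. In particular (for $j=r=0$, $\mathbf w_0=[1\cdots1]$) a multiple of the dimension vector of the projective indecomposable $D_n$-modules is a left eigenvector of $M$ with eigenvalue $2$.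
   Context: $n\ge3$ odd, $q$ a primitive $n$-th root of unity in $\mathbb C$. $I$ is the $n\times n$ identity, $Z$ the $n\times n$ cyclic permutation matrix with $(Zu)_i=u_{i+1}$ (indices mod $n$). $M$ is the $n^2\times n^2$ block matrix of $n\times n$ blocks $M_{ab}$ ($0\le a,b\le n-1$) with $M_{a,a+1}=I$ ($0\le a\le n-2$), $M_{a,a-1}=Z$ ($1\le a\le n-2$), $M_{n-1,0}=2I$, $M_{n-1,n-2}=2Z$, other blocks zero (the McKay matrix of the $D_n$-module $V(2,0)$); row vectors of length $n^2$ are written as $n$ blocks of length $n$ matching this block structure. $\mathcal L_k(t)$: $\mathcal L_0=2$, $\mathcal L_1=t$, $\mathcal L_k=t\mathcal L_{k-1}-\mathcal L_{k-2}$; one has $\mathcal L_k(x+x^{-1})=x^k+x^{-k}$. The projective indecomposable modules $P(\ell,r)$ ($1\le\ell<n$) have dimension $2n$ and $V(n,r)$ has dimension $n$. *)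

theory Defs
  imports Complex_Main
begin

fun Lpoly :: "nat \<Rightarrow> complex \<Rightarrow> complex" where
  "Lpoly 0 t = 2"
| "Lpoly (Suc 0) t = t"
| "Lpoly (Suc (Suc k)) t = t * Lpoly (Suc k) t - Lpoly k t"

definition Zmat :: "nat \<Rightarrow> nat \<Rightarrow> nat \<Rightarrow> complex" where
  "Zmat n i c = (if c = Suc i mod n then 1 else 0)"

definition Mblock :: "nat \<Rightarrow> nat \<Rightarrow> nat \<Rightarrow> nat \<Rightarrow> nat \<Rightarrow> complex" where
  "Mblock n a b i c =
     (if a \<le> n - 2 \<and> b = a + 1 then (if i = c then 1 else 0)
      else if 1 \<le> a \<and> a \<le> n - 2 \<and> b + 1 = a then Zmat n i c
      else if a = n - 1 \<and> b = 0 then (if i = c then 2 else 0)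
      else if a = n - 1 \<and> b = n - 2 then 2 * Zmat n i c
      else 0)"

text \<open>The n^2 x n^2 matrix M; index x = a*n + i stands for position i in block a.\<close>
definition Mmat :: "nat \<Rightarrow> nat \<Rightarrow> nat \<Rightarrow> complex" where
  "Mmat n x y = Mblock n (x div n) (y div n) (x mod n) (y mod n)"

definition wvec :: "complex \<Rightarrow> nat \<Rightarrow> nat \<Rightarrow> (nat \<Rightarrow> complex) \<Rightarrow> nat \<Rightarrow> nat \<Rightarrow> complex" where
  "wvec q j r w0 k c =
     (if k = 0 then w0 c else q ^ (k * r) * Lpoly k (q ^ j + inverse q ^ j) * w0 c)"

text \<open>w_(j,r) = [w_(n-1) w_(n-2) ... w_1 w_0]: block a holds w_(n-1-a).\<close>
definition Wjr :: "nat \<Rightarrow> complex \<Rightarrow> nat \<Rightarrow> nat \<Rightarrow> (nat \<Rightarrow> complex) \<Rightarrow> nat \<Rightarrow> complex" where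
  "Wjr n q j r w0 x = wvec q j r w0 (n - 1 - x div n) (x mod n)"

end

theory Submission imports Defs begin

text \<open>Write \<open>x = q^j\<close>, \<open>y = q^-j\<close> and \<open>s = q^r\<close>. Since \<open>w\<^sub>0 Z = s\<^sup>2 w\<^sub>0\<close>, every block
  \<open>M\<^sub>a\<^sub>b = \<alpha>\<^sub>a\<^sub>b I + \<beta>\<^sub>a\<^sub>b Z\<close> acts on multiples of \<open>w\<^sub>0\<close> as the scalar \<open>\<alpha>\<^sub>a\<^sub>b + \<beta>\<^sub>a\<^sub>b s\<^sup>2\<close>, so the
  eigenvalue equation reduces to one for the coefficients \<open>e\<^sub>k = s\<^sup>k (x\<^sup>k + y\<^sup>k)\<close> against an
  \<open>n \<times> n\<close> tridiagonal-plus-corner matrix. That equation is the three-term recurrence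
  \<open>e\<^sub>k\<^sub>+\<^sub>1 + s\<^sup>2 e\<^sub>k\<^sub>-\<^sub>1 = s(x + y) e\<^sub>k\<close>; the corner entries close it up because \<open>e\<^sub>0 = e\<^sub>n = 2\<close>
  (as \<open>q\<^sup>n = 1\<close>), which is also why \<open>w\<^sub>0\<close> itself carries coefficient \<open>1 = e\<^sub>0/2\<close>.\<close>

lemma Lpoly_sum_inverse_pair:
  assumes "x * y = 1"
  shows "Lpoly k (x + y) = x ^ k + y ^ k"
proof (induction k "x + y" rule: Lpoly.induct)
  case (3 k)
  have "(x + y) * (x ^ Suc k + y ^ Suc k) - (x ^ k + y ^ k)
        = x ^ Suc (Suc k) + y ^ Suc (Suc k) + (x * y - 1) * (x ^ k + y ^ k)"
    by (simp add: algebra_simps)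
  with 3 assms show ?case by simp
qed simp_all

lemma sum_lessThan_mult_blocks:
  fixes f :: "nat \<Rightarrow> 'a::comm_monoid_add"
  shows "(\<Sum>x<m * n. f x) = (\<Sum>a<m. \<Sum>i<n. f (a * n + i))"
proof -
  have "(\<Sum>x\<in>{a * n..<a * n + n}. f x) = (\<Sum>i<n. f (a * n + i))" for a
    using sum.shift_bounds_nat_ivl[of f 0 "a * n" n] by (simp add: atLeast0LessThan add.commute)
  then show ?thesis
    using sum.nat_group[of f n m] by simp
qed

definition twisted_power_sum :: "'a::comm_ring_1 \<Rightarrow> 'a \<Rightarrow> 'a \<Rightarrow> nat \<Rightarrow> 'a" where
  "twisted_power_sum s x y k = s ^ k * (x ^ k + y ^ k)"

lemma twisted_power_sum_recurrence:
  fixes s x y :: "'a::comm_ring_1"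
  assumes "x * y = 1"
  shows "twisted_power_sum s x y (k + 2) + s\<^sup>2 * twisted_power_sum s x y k
           = s * (x + y) * twisted_power_sum s x y (k + 1)"
proof -
  have "(x + y) * (x ^ (k + 1) + y ^ (k + 1)) = x ^ (k + 2) + y ^ (k + 2) + x * y * (x ^ k + y ^ k)"
    by (simp add: algebra_simps)
  then have pair: "(x + y) * (x ^ (k + 1) + y ^ (k + 1)) = x ^ (k + 2) + y ^ (k + 2) + (x ^ k + y ^ k)"
    using assms by simp
  have "twisted_power_sum s x y (k + 2) + s\<^sup>2 * twisted_power_sum s x y k
        = s ^ (k + 2) * (x ^ (k + 2) + y ^ (k + 2) + (x ^ k + y ^ k))"
    by (simp add: twisted_power_sum_def power_add algebra_simps power2_eq_square)
  also have "\<dots> = s ^ (k + 2) * ((x + y) * (x ^ (k + 1) + y ^ (k + 1)))"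
    by (simp only: pair)
  also have "\<dots> = s * (x + y) * twisted_power_sum s x y (k + 1)"
    by (simp add: twisted_power_sum_def algebra_simps)
  finally show ?thesis .
qed

lemma wvec_eq_twisted_power_sum:
  assumes "q \<noteq> 0"
  shows "wvec q j r w0 k c
           = ((twisted_power_sum (q ^ r) (q ^ j) (inverse q ^ j))(0 := 1)) k * w0 c"
proof -
  have "q ^ j * inverse q ^ j = 1"
    using assms by (simp add: power_mult_distrib[symmetric])
  moreover have "q ^ (k * r) = (q ^ r) ^ k"
    by (metis mult.commute power_mult)
  ultimately show ?thesis
    by (simp add: wvec_def twisted_power_sum_def Lpoly_sum_inverse_pair)
qed

definition McKay_id_coeff :: "nat \<Rightarrow> nat \<Rightarrow> nat \<Rightarrow> complex" where
  "McKay_id_coeff n a b =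
     (if a \<le> n - 2 \<and> b = a + 1 then 1 else if a = n - 1 \<and> b = 0 then 2 else 0)"

definition McKay_Z_coeff :: "nat \<Rightarrow> nat \<Rightarrow> nat \<Rightarrow> complex" where
  "McKay_Z_coeff n a b =
     (if 1 \<le> a \<and> a \<le> n - 2 \<and> b + 1 = a then 1 else if a = n - 1 \<and> b = n - 2 then 2 else 0)"

lemma Mblock_eq_id_Z_combination:
  assumes "n \<ge> 3"
  shows "Mblock n a b i c
           = (if i = c then McKay_id_coeff n a b else 0) + McKay_Z_coeff n a b * Zmat n i c"
  using assms by (auto simp: Mblock_def McKay_id_coeff_def McKay_Z_coeff_def)

lemma row_times_Mblock_Z_eigenvector:
  assumes "n \<ge> 3" and "c < n"
    and Z_eigen: "(\<Sum>i<n. w i * Zmat n i c) = Q * w c"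
  shows "(\<Sum>i<n. w i * Mblock n a b i c) = (McKay_id_coeff n a b + McKay_Z_coeff n a b * Q) * w c"
proof -
  have "w i * Mblock n a b i c
        = (if i = c then McKay_id_coeff n a b * w c else 0) + McKay_Z_coeff n a b * (w i * Zmat n i c)"
    for i
    by (simp add: Mblock_eq_id_Z_combination[OF \<open>n \<ge> 3\<close>] algebra_simps)
  then have "(\<Sum>i<n. w i * Mblock n a b i c)
             = McKay_id_coeff n a b * w c + McKay_Z_coeff n a b * (\<Sum>i<n. w i * Zmat n i c)"
    using \<open>c < n\<close> by (simp add: sum.distrib sum_distrib_left)
  then show ?thesis
    using Z_eigen by (simp add: algebra_simps)
qed

lemma sum_McKay_id_coeff:
  assumes "n \<ge> 3" and "b < n"
  shows "(\<Sum>a<n. f a * McKay_id_coeff n a b)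
           = (if b = 0 then 2 * f (n - 1) else f (b - 1))"
proof -
  have "McKay_id_coeff n a b = (if a = b - 1 \<and> b \<noteq> 0 then 1 else 0)
                               + (if a = n - 1 \<and> b = 0 then 2 else 0)" if "a < n" for a
    using assms that by (auto simp: McKay_id_coeff_def)
  then have "(\<Sum>a<n. f a * McKay_id_coeff n a b)
             = (\<Sum>a<n. if a = b - 1 then (if b \<noteq> 0 then f a else 0) else 0)
               + (\<Sum>a<n. if a = n - 1 then (if b = 0 then 2 * f a else 0) else 0)"
    unfolding sum.distrib[symmetric] by (intro sum.cong) auto
  moreover have "b - 1 < n"
    using assms by simp
  ultimately show ?thesis
    by simp
qed

lemma sum_McKay_Z_coeff:
  assumes "n \<ge> 3" and "b < n"
  shows "(\<Sum>a<n. f a * McKay_Z_coeff n a b)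
           = (if b = n - 2 then 2 * f (n - 1) else if b = n - 1 then 0 else f (b + 1))"
proof -
  have "McKay_Z_coeff n a b = (if a = b + 1 \<and> b + 3 \<le> n then 1 else 0)
                              + (if a = n - 1 \<and> b = n - 2 then 2 else 0)" if "a < n" for a
    using assms that by (auto simp: McKay_Z_coeff_def)
  then have "(\<Sum>a<n. f a * McKay_Z_coeff n a b)
             = (\<Sum>a<n. if a = b + 1 then (if b + 3 \<le> n then f a else 0) else 0)
               + (\<Sum>a<n. if a = n - 1 then (if b = n - 2 then 2 * f a else 0) else 0)"
    unfolding sum.distrib[symmetric] by (intro sum.cong) auto
  then show ?thesis
    using assms by auto
qed

lemma block_row_times_Mmat:
  assumes "n \<ge> 3" and "y < n\<^sup>2"
    and Z_eigen: "\<forall>c<n. (\<Sum>i<n. w i * Zmat n i c) = Q * w c"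
  shows "(\<Sum>x<n\<^sup>2. f (x div n) * w (x mod n) * Mmat n x y)
           = (\<Sum>a<n. f a * (McKay_id_coeff n a (y div n) + McKay_Z_coeff n a (y div n) * Q))
             * w (y mod n)"
proof -
  have "n > 0" "y mod n < n"
    using \<open>n \<ge> 3\<close> by simp_all
  have "(\<Sum>x<n\<^sup>2. f (x div n) * w (x mod n) * Mmat n x y)
        = (\<Sum>a<n. \<Sum>i<n. f a * (w i * Mblock n a (y div n) i (y mod n)))"
    using \<open>n > 0\<close> by (simp add: power2_eq_square sum_lessThan_mult_blocks Mmat_def mult.assoc)
  also have "\<dots> = (\<Sum>a<n. f a * ((McKay_id_coeff n a (y div n) + McKay_Z_coeff n a (y div n) * Q)
                                   * w (y mod n)))"
    using row_times_Mblock_Z_eigenvector[OF \<open>n \<ge> 3\<close> \<open>y mod n < n\<close>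
        Z_eigen[rule_format, OF \<open>y mod n < n\<close>]]
    by (simp add: sum_distrib_left[symmetric])
  finally show ?thesis
    by (simp add: sum_distrib_right mult.assoc)
qed

lemma McKay_reduced_left_eigenvector:
  fixes e :: "nat \<Rightarrow> complex"
  assumes "n \<ge> 3" and "b < n"
    and "e 0 = 2" and "e 1 = lam" and "e n = 2"
    and recurrence: "\<And>k. 1 \<le> k \<Longrightarrow> k < n \<Longrightarrow> e (k + 1) + Q * e (k - 1) = lam * e k"
  shows "(\<Sum>a<n. (e(0 := 1)) (n - 1 - a) * (McKay_id_coeff n a b + McKay_Z_coeff n a b * Q))
           = lam * (e(0 := 1)) (n - 1 - b)"
proof -
  let ?f = "\<lambda>a. (e(0 := 1)) (n - 1 - a)"
  have "(\<Sum>a<n. ?f a * (McKay_id_coeff n a b + McKay_Z_coeff n a b * Q))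
        = (\<Sum>a<n. ?f a * McKay_id_coeff n a b) + Q * (\<Sum>a<n. ?f a * McKay_Z_coeff n a b)"
    by (simp add: distrib_left sum.distrib sum_distrib_left algebra_simps)
  also have "\<dots> = (if b = 0 then 2 * ?f (n - 1) else ?f (b - 1))
                  + Q * (if b = n - 2 then 2 * ?f (n - 1) else if b = n - 1 then 0 else ?f (b + 1))"
    using assms(1,2) by (simp only: sum_McKay_id_coeff sum_McKay_Z_coeff)
  also have "\<dots> = lam * ?f b"
  proof -
    consider "b = 0" | "b = n - 2" | "b = n - 1" | "0 < b" "b + 3 \<le> n"
      using assms(1,2) by linarith
    then show ?thesis
    proof cases
      case 1
      then show ?thesis
        using recurrence[of "n - 1"] assms(1,5) by (simp add: algebra_simps)
    next
      case 2
      then have "n - 1 - (b - 1) = 1 + 1"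
        using assms(1) by simp
      with 2 show ?thesis
        using recurrence[of 1] assms(1,3) by (simp add: algebra_simps numeral_2_eq_2)
    next
      case 3
      then have "b \<noteq> n - 2" "b \<noteq> 0" "n - 1 - (b - 1) = 1"
        using assms(1) by auto
      with 3 show ?thesis
        using assms(4) by simp
    next
      case 4
      then have "b \<noteq> n - 2" "b \<noteq> n - 1" "1 \<le> n - 1 - b"
        "n - 1 - (b - 1) = (n - 1 - b) + 1" "n - 1 - (b + 1) = (n - 1 - b) - 1" "n - 1 - b \<noteq> 0"
        by auto
      with 4 show ?thesis
        using recurrence[of "n - 1 - b"] by (simp add: algebra_simps)
    qed
  qed
  finally show ?thesis .
qed

theorem mainTheorem16:
  fixes n j r :: nat and q :: complex and w0 :: "nat \<Rightarrow> complex"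
  assumes "odd n" and "n \<ge> 3"
    and "q ^ n = 1" and "\<forall>k. 0 < k \<and> k < n \<longrightarrow> q ^ k \<noteq> 1"
    and "r < n" and "j \<le> (n - 1) div 2"
    and "\<exists>c<n. w0 c \<noteq> 0"
    and "\<forall>c<n. (\<Sum>i<n. w0 i * Zmat n i c) = q ^ (2 * r) * w0 c"
  shows "\<forall>y<n^2. (\<Sum>x<n^2. Wjr n q j r w0 x * Mmat n x y)
                 = q ^ r * (q ^ j + inverse q ^ j) * Wjr n q j r w0 y"
proof (intro allI impI)
  \<comment> \<open>Only \<open>q ^ n = 1\<close> matters: primitivity, oddness, the bound on \<open>j\<close> and \<open>w0 \<noteq> 0\<close> are unused.\<close>
  fix y assume "y < n\<^sup>2"
  have "q \<noteq> 0"
    using \<open>q ^ n = 1\<close> \<open>n \<ge> 3\<close> by (auto simp: power_0_left)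
  define e where "e = twisted_power_sum (q ^ r) (q ^ j) (inverse q ^ j)"
  have inverse_pair: "q ^ j * inverse q ^ j = 1"
    using \<open>q \<noteq> 0\<close> by (simp add: power_mult_distrib[symmetric])
  have "(q ^ i) ^ n = 1" for i
    using \<open>q ^ n = 1\<close> by (metis mult.commute power_mult power_one)
  then have "e n = 2"
    by (simp add: e_def twisted_power_sum_def power_inverse)
  have "(\<Sum>x<n\<^sup>2. Wjr n q j r w0 x * Mmat n x y)
        = (\<Sum>a<n. (e(0 := 1)) (n - 1 - a)
                   * (McKay_id_coeff n a (y div n) + McKay_Z_coeff n a (y div n) * q ^ (2 * r)))
          * w0 (y mod n)"
    unfolding Wjr_def wvec_eq_twisted_power_sum[OF \<open>q \<noteq> 0\<close>] e_def[symmetric]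
    by (rule block_row_times_Mmat[OF \<open>n \<ge> 3\<close> \<open>y < n\<^sup>2\<close> assms(8)])
  also have "\<dots> = q ^ r * (q ^ j + inverse q ^ j) * Wjr n q j r w0 y"
  proof -
    have "y div n < n"
      using \<open>y < n\<^sup>2\<close> by (simp add: power2_eq_square less_mult_imp_div_less)
    moreover have "e (k + 1) + q ^ (2 * r) * e (k - 1) = q ^ r * (q ^ j + inverse q ^ j) * e k"
      if "1 \<le> k" for k
      using twisted_power_sum_recurrence[OF inverse_pair, of "q ^ r" "k - 1"] that
      by (simp add: e_def power_add mult_2 power2_eq_square)
    ultimately show ?thesis
      using McKay_reduced_left_eigenvector[OF \<open>n \<ge> 3\<close>, of "y div n" e "q ^ r * (q ^ j + inverse q ^ j)"]
        \<open>e n = 2\<close>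
      by (simp add: e_def twisted_power_sum_def Wjr_def wvec_eq_twisted_power_sum[OF \<open>q \<noteq> 0\<close>])
  qed
  finally show "(\<Sum>x<n\<^sup>2. Wjr n q j r w0 x * Mmat n x y)
                = q ^ r * (q ^ j + inverse q ^ j) * Wjr n q j r w0 y" .
qed

end
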